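(* Let $\mathcal N=\{(M_2,N_1,N_3)\in\mathbb{C}^3\}$ carry the system \[ \dot M_2=N_3,\qquad \dot N_1=-M_2N_3,\qquad \dot N_3=M_2N_1 \] restricted to $N_1^2+N_3^2=1$. For $k\in(0,1]$ let $\Gamma_k$ be the complex phase curve given by $\frac12M_2^2+N_1=2k^2-1$, $N_1^2+N_3^2=1$ (for $k=1$ with the equilibrium $u=(M_2,N_1,N_3)=(0,1,0)$ removed). Let $\Omega$ be the closure of the set of real points of $\Gamma_1$ (i.e. of the union of the two real orbits homoclinic to the hyperbolic equilibrium $u$). Then for every complex neighbourhood $U\subset\mathcal N$ of $\Omega$ there exists $\epsilon>0$ such that for $0<1-k<\epsilon$ the fundamental group $\pi_1(\Gamma_k)$ is generated by loops lying in $U$.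
   Context: Here $\mathcal N$ is identified with the invariant submanifold $\{(\mathbf M,\mathbf N)\in\mathbb{C}^6: M_1=M_3=N_2=0,\ N_1^2+N_3^2=1\}$ of the complexified Euler–Poisson equations $\dot{\mathbf M}=[\mathbf M,\mathbf J\mathbf M]+[\mathbf N,\mathbf L]$, $\dot{\mathbf N}=[\mathbf N,\mathbf J\mathbf M]$ written in a body frame with $\mathbf L=[1,0,0]^T$ and second diagonal entry of $\mathbf J$ equal to $1$; the system above is the restriction to $\mathcal N$, with Hamiltonian $\frac12M_2^2+N_1$. For $k\in(0,1)$, $\Gamma_k$ is a smooth affine elliptic curve (a torus with two points removed). *)

theory Defs
  imports "HOL-Analysis.Analysis"
begin

type_synonym pt = "complex \<times> complex \<times> complex"  (* (M2, N1, N3) *)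

definition NN :: "pt set" where
  "NN = {(m, n1, n3). n1^2 + n3^2 = 1}"

definition Gamma :: "real \<Rightarrow> pt set" where
  "Gamma k = {(m, n1, n3). m^2 / 2 + n1 = of_real (2 * k^2 - 1) \<and> n1^2 + n3^2 = 1}
             - (if k = 1 then {(0, 1, 0)} else {})"

definition real_pt :: "pt \<Rightarrow> bool" where
  "real_pt p = (Im (fst p) = 0 \<and> Im (fst (snd p)) = 0 \<and> Im (snd (snd p)) = 0)"

definition Omega :: "pt set" where
  "Omega = closure {p \<in> Gamma 1. real_pt p}"

text \<open>pi_1(S) (at some base point x0 in S \<inter> U) is generated by loops lying in U:
  every loop in S at x0 is homotopic in S (rel endpoints) to a finite concatenation
  of loops at x0 lying in S \<inter> U (inverses are again such loops).\<close>
definition pi1_generated_in :: "pt set \<Rightarrow> pt set \<Rightarrow> bool" where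
  "pi1_generated_in S U =
    (\<exists>x0 \<in> S \<inter> U. \<forall>g. path g \<and> path_image g \<subseteq> S \<and> pathstart g = x0 \<and> pathfinish g = x0 \<longrightarrow>
       (\<exists>gs :: (real \<Rightarrow> pt) list.
          (\<forall>h \<in> set gs. path h \<and> path_image h \<subseteq> S \<inter> U \<and> pathstart h = x0 \<and> pathfinish h = x0) \<and>
          homotopic_paths S g (foldr (+++) gs (linepath x0 x0))))"

end

theory Submission
  imports Defs
begin

(* In the coordinates w = N1 + i N3 and 1/w = N1 - i N3 the curve Gamma_k becomes
   M^2 = -(w - b)(w - cnj b)/w with |b| = 1 and Re b = 2k^2 - 1, a double cover of the punctured
   w-plane branched only over the unit circle. Away from the unit circle one can therefore push w
   radially into the annulus 1/rho <= |w| <= rho and lift M continuously. This homotopy fixes the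
   annulus, so it moves every loop, within Gamma_k and keeping the base point, into the part of
   Gamma_k over the annulus. As k -> 1 and rho -> 1 that part approaches Omega: a point with |w|
   near 1 is near (+-sqrt (2 - 2 Re e), Re e, Im e) with e = w/|w|. Hence it eventually lies in U. *)

lemma homotopic_paths_deformation:
  fixes H :: "real \<times> 'a::topological_space \<Rightarrow> 'a"
  assumes cont: "continuous_on ({0..1} \<times> S) H"
    and maps: "\<And>t x. t \<in> {0..1} \<Longrightarrow> x \<in> S \<Longrightarrow> H (t, x) \<in> S"
    and start: "\<And>x. x \<in> S \<Longrightarrow> H (0, x) = x"
    and ends: "\<And>t. t \<in> {0..1} \<Longrightarrow> H (t, pathstart g) = pathstart g"
      "\<And>t. t \<in> {0..1} \<Longrightarrow> H (t, pathfinish g) = pathfinish g"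
    and g: "path g" "path_image g \<subseteq> S"
  shows "homotopic_paths S g (\<lambda>s. H (1, g s))"
proof -
  have gS: "g s \<in> S" if "s \<in> {0..1}" for s
    using g that by (auto simp: path_image_def)
  have "continuous_on ({0..1} \<times> {0..1}) (\<lambda>z::real \<times> real. g (snd z))"
    using g(1) unfolding path_def by (rule continuous_on_compose2[OF _ continuous_on_snd]) auto
  then have "continuous_on ({0..1} \<times> {0..1}) (\<lambda>z::real \<times> real. (fst z, g (snd z)))"
    by (intro continuous_on_Pair continuous_on_fst continuous_on_id)
  then have cont_g: "continuous_on ({0..1} \<times> {0..1}) (\<lambda>z. H (fst z, g (snd z)))"
    by (rule continuous_on_compose2[OF cont]) (auto simp: gS)
  show ?thesis
    unfolding homotopic_paths
  proof (intro exI[of _ "\<lambda>z. H (fst z, g (snd z))"] conjI ballI Pi_I cont_g)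
    show "H (fst z, g (snd z)) \<in> S" if "z \<in> {0..1} \<times> {0..1}" for z
      using that maps gS by (auto simp: mem_Times_iff)
    show "H (fst (0, s), g (snd (0, s))) = g s" if "s \<in> {0..1}" for s
      using start gS that by simp
    show "pathstart ((\<lambda>z. H (fst z, g (snd z))) \<circ> Pair t) = pathstart g"
      "pathfinish ((\<lambda>z. H (fst z, g (snd z))) \<circ> Pair t) = pathfinish g" if "t \<in> {0..1}" for t
      using ends that by (simp_all add: pathstart_def pathfinish_def)
  qed simp
qed

lemma pi1_generated_in_if_deforms_into:
  fixes H :: "real \<times> pt \<Rightarrow> pt"
  assumes cont: "continuous_on ({0..1} \<times> S) H"
    and maps: "\<And>t x. t \<in> {0..1} \<Longrightarrow> x \<in> S \<Longrightarrow> H (t, x) \<in> S"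
    and start: "\<And>x. x \<in> S \<Longrightarrow> H (0, x) = x"
    and base: "x0 \<in> S" "\<And>t. t \<in> {0..1} \<Longrightarrow> H (t, x0) = x0"
    and into: "\<And>x. x \<in> S \<Longrightarrow> H (1, x) \<in> U"
  shows "pi1_generated_in S U"
  unfolding pi1_generated_in_def
proof (intro bexI[of _ x0] allI impI)
  show "x0 \<in> S \<inter> U"
    using into[OF base(1)] base by simp
  fix g :: "real \<Rightarrow> pt"
  assume g: "path g \<and> path_image g \<subseteq> S \<and> pathstart g = x0 \<and> pathfinish g = x0"
  define h where "h s = H (1, g s)" for s
  have hom: "homotopic_paths S g h"
    unfolding h_def using g base by (intro homotopic_paths_deformation[OF cont maps start]) auto
  have path: "path h" and ends: "pathstart h = x0" "pathfinish h = x0"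
    using g homotopic_paths_imp_path[OF hom] homotopic_paths_imp_pathstart[OF hom]
      homotopic_paths_imp_pathfinish[OF hom] by auto
  have "path_image h \<subseteq> U"
    unfolding path_image_def h_def
  proof (rule image_subsetI)
    fix s :: real assume "s \<in> {0..1}"
    then have "g s \<in> S"
      using g by (auto simp: path_image_def)
    then show "H (1, g s) \<in> U"
      by (rule into)
  qed
  then have image: "path_image h \<subseteq> S \<inter> U"
    using homotopic_paths_imp_subset[OF hom] by auto
  note hom
  also have "homotopic_paths S h (h +++ linepath x0 x0)"
    using homotopic_paths_rid'[OF path _ ends(2)[symmetric]] image by (auto intro: homotopic_paths_sym)
  finally show "\<exists>gs. (\<forall>h\<in>set gs. path h \<and> path_image h \<subseteq> S \<inter> U \<and> pathstart h = x0 \<and> pathfinish h = x0) \<and>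
      homotopic_paths S g (foldr (+++) gs (linepath x0 x0))"
    using path image ends by (intro exI[of _ "[h]"]) simp
qed

lemma continuous_on_csqrt_Re_pos:
  assumes "continuous_on S f" "\<And>x. x \<in> S \<Longrightarrow> 0 < Re (f x)"
  shows "continuous_on S (\<lambda>x. csqrt (f x))"
proof (rule continuous_on_compose2[OF continuous_on_csqrt assms(1)])
  show "f ` S \<subseteq> - \<real>\<^sub>\<le>\<^sub>0"
    using assms(2) by (force simp: complex_nonpos_Reals_iff)
qed

(* The last hypothesis says that z and s z lie strictly on the same side of the unit circle. *)
lemma Re_scaled_ratio_pos:
  assumes b: "cmod b = 1" and s: "0 < s" and z: "0 < (s * cmod z - 1) * (cmod z - 1)"
  shows "0 < Re ((of_real s * z - b) / (z - b))"
proof -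
  have "Re ((of_real s * z - b) * cnj (z - b)) = s * (cmod z)^2 - (s + 1) * Re (z * cnj b) + 1"
  proof -
    have "(Re b)^2 + (Im b)^2 = 1"
      using b by (metis cmod_power2 power_one)
    moreover have "(cmod z)^2 = (Re z)^2 + (Im z)^2"
      by (simp add: cmod_power2)
    ultimately show ?thesis
      by (simp add: cmod_power2 algebra_simps power2_eq_square)
  qed
  moreover have "(s + 1) * Re (z * cnj b) \<le> (s + 1) * cmod z"
    using complex_Re_le_cmod[of "z * cnj b"] b s by (simp add: norm_mult)
  moreover have "s * (cmod z)^2 - (s + 1) * cmod z + 1 = (s * cmod z - 1) * (cmod z - 1)"
    by (simp add: algebra_simps power2_eq_square)
  ultimately have "0 < Re ((of_real s * z - b) * cnj (z - b))"
    using z by linarith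
  then show ?thesis
    by (simp add: Re_complex_div_gt_0)
qed

lemma exists_real_root_near:
  fixes M :: complex
  assumes "0 \<le> a"
  shows "\<exists>m. m^2 = a \<and> cmod (M - of_real m) \<le> sqrt (cmod (M^2 - of_real a))"
proof -
  obtain m where m: "m^2 = a" and le: "cmod (M - of_real m) \<le> cmod (M + of_real m)"
  proof (cases "cmod (M - of_real (sqrt a)) \<le> cmod (M + of_real (sqrt a))")
    case True
    then show ?thesis
      using that[of "sqrt a"] assms by simp
  next
    case False
    then show ?thesis
      using that[of "- sqrt a"] assms by simp
  qed
  have "(cmod (M - of_real m))^2 \<le> cmod (M - of_real m) * cmod (M + of_real m)"
    unfolding power2_eq_square using le by (simp add: mult_left_mono)
  also have "\<dots> = cmod (M^2 - of_real a)"
    by (simp add: m[symmetric] norm_mult[symmetric] power2_eq_square algebra_simps)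
  finally show ?thesis
    using m real_le_rsqrt by blast
qed

lemma inverse_less_self: "1 < (\<rho>::real) \<Longrightarrow> 1 / \<rho> < \<rho>"
  using less_trans[of "1 / \<rho>" 1 \<rho>] by simp

lemma abs_sub_one_le_annulus:
  fixes \<rho> x :: real
  assumes "1 < \<rho>" "1 / \<rho> \<le> x" "x \<le> \<rho>"
  shows "\<bar>x - 1\<bar> \<le> \<rho> - 1"
proof -
  have "0 \<le> (\<rho> - 1)^2"
    by simp
  then have "1 - 1 / \<rho> \<le> \<rho> - 1"
    using assms(1) by (simp add: field_simps power2_eq_square algebra_simps)
  then show ?thesis
    using assms by auto
qed

definition level_curve :: "real \<Rightarrow> pt set" where
  "level_curve c = {(m, n1, n3). m^2 / 2 + n1 = of_real c \<and> n1^2 + n3^2 = 1}"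

definition w_plus :: "pt \<Rightarrow> complex" where
  "w_plus p = fst (snd p) + \<i> * snd (snd p)"

definition w_minus :: "pt \<Rightarrow> complex" where
  "w_minus p = fst (snd p) - \<i> * snd (snd p)"

definition pt_of_w :: "complex \<Rightarrow> complex \<Rightarrow> complex \<Rightarrow> pt" where
  "pt_of_w m w v = (m, (w + v) / 2, (w - v) / (2 * \<i>))"

lemma w_plus_pt_of_w [simp]: "w_plus (pt_of_w m w v) = w"
  by (simp add: w_plus_def pt_of_w_def field_simps)

lemma w_minus_pt_of_w [simp]: "w_minus (pt_of_w m w v) = v"
  by (simp add: w_minus_def pt_of_w_def field_simps)

lemma fst_pt_of_w [simp]: "fst (pt_of_w m w v) = m"
  by (simp add: pt_of_w_def)

lemma pt_of_w_w_plus_w_minus: "pt_of_w (fst p) (w_plus p) (w_minus p) = p"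
  by (cases p) (simp add: pt_of_w_def w_plus_def w_minus_def field_simps)

lemma pt_of_w_in_level_curve_iff:
  "pt_of_w m w v \<in> level_curve c \<longleftrightarrow> w * v = 1 \<and> m^2 = 2 * of_real c - w - v"
proof -
  have "((w + v) / 2)^2 + ((w - v) / (2 * \<i>))^2 = w * v"
    by (simp add: field_simps power2_eq_square)
  moreover have "m^2 / 2 + (w + v) / 2 - of_real c = (m^2 - (2 * of_real c - w - v)) / 2"
    by (simp add: field_simps)
  then have "m^2 / 2 + (w + v) / 2 = of_real c \<longleftrightarrow> m^2 = 2 * of_real c - w - v"
    by (simp only: eq_iff_diff_eq_0[of "_ / 2 + _"] eq_iff_diff_eq_0[of "m^2"]) simp
  ultimately show ?thesis
    by (auto simp: level_curve_def pt_of_w_def)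
qed

lemma level_curve_iff:
  "p \<in> level_curve c \<longleftrightarrow> w_plus p * w_minus p = 1 \<and> (fst p)^2 = 2 * of_real c - w_plus p - w_minus p"
  using pt_of_w_in_level_curve_iff[of "fst p" "w_plus p" "w_minus p" c]
  by (simp add: pt_of_w_w_plus_w_minus)

lemma w_minus_eq_inverse: "p \<in> level_curve c \<Longrightarrow> w_minus p = 1 / w_plus p"
  by (metis level_curve_iff mult.commute nonzero_eq_divide_eq zero_neq_one mult_zero_left)

lemma w_plus_nonzero: "p \<in> level_curve c \<Longrightarrow> w_plus p \<noteq> 0"
  by (auto simp: level_curve_iff)

lemma Gamma_eq_level_curve: "k \<noteq> 1 \<Longrightarrow> Gamma k = level_curve (2 * k^2 - 1)"
  by (auto simp: Gamma_def level_curve_def)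

lemma level_curve_subset_NN: "level_curve c \<subseteq> NN"
  by (auto simp: level_curve_def NN_def)

lemma closed_level_curve: "closed (level_curve c)"
proof -
  have "level_curve c = {p. (fst p)^2 / 2 + fst (snd p) = of_real c \<and> (fst (snd p))^2 + (snd (snd p))^2 = 1}"
    by (auto simp: level_curve_def)
  then show ?thesis
    by (simp only:) (intro closed_Collect_conj closed_Collect_eq continuous_intros, auto)
qed

lemma dist_pt_of_w_le:
  "dist (pt_of_w m w v) (pt_of_w m' w' v') \<le> cmod (m - m') + cmod (w - w') + cmod (v - v')"
proof -
  have "dist (pt_of_w m w v) (pt_of_w m' w' v') \<le>
      cmod (m - m') + (cmod ((w - w') + (v - v')) / 2 + cmod ((w - w') - (v - v')) / 2)"
    using norm_Pair_le[of "m - m'" "((w + v) / 2 - (w' + v') / 2, (w - v) / (2 * \<i>) - (w' - v') / (2 * \<i>))"]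
      norm_Pair_le[of "(w + v) / 2 - (w' + v') / 2" "(w - v) / (2 * \<i>) - (w' - v') / (2 * \<i>)"]
    by (simp add: pt_of_w_def dist_norm diff_divide_distrib[symmetric] norm_divide norm_mult algebra_simps)
  also have "\<dots> \<le> cmod (m - m') + cmod (w - w') + cmod (v - v')"
    using norm_triangle_ineq[of "w - w'" "v - v'"] norm_triangle_ineq4[of "w - w'" "v - v'"] by linarith
  finally show ?thesis .
qed

lemma factor_by_unit_roots:
  assumes "cmod b = 1" "z \<noteq> 0"
  shows "2 * of_real (Re b) - z - 1 / z = - ((z - b) * (z - cnj b)) / z"
proof -
  have "b * cnj b = 1"
    using complex_norm_square[of b] assms(1) by simp
  then have "(z - b) * (z - cnj b) = z * z - (b + cnj b) * z + 1"
    by (simp add: algebra_simps)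
  then have "(z - b) * (z - cnj b) = z * z - 2 * of_real (Re b) * z + 1"
    by (simp add: complex_add_cnj)
  with assms(2) show ?thesis
    by (simp add: field_simps)
qed

(* Scaling w by s multiplies -(w - b)(w - cnj b)/w by the product of the two ratios below divided
   by s; lift_factor is a square root of that factor, continuous while w and s w stay on one side
   of the unit circle. *)
definition lift_factor :: "complex \<Rightarrow> real \<Rightarrow> complex \<Rightarrow> complex" where
  "lift_factor b s z =
    csqrt ((of_real s * z - b) / (z - b)) * csqrt ((of_real s * z - cnj b) / (z - cnj b)) / of_real (sqrt s)"

definition scaled_pt :: "complex \<Rightarrow> real \<Rightarrow> pt \<Rightarrow> pt" where
  "scaled_pt b s p =
    pt_of_w (fst p * lift_factor b s (w_plus p)) (of_real s * w_plus p) (w_minus p / of_real s)"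

lemma lift_factor_square:
  "0 < s \<Longrightarrow> (lift_factor b s z)^2 =
    (of_real s * z - b) / (z - b) * ((of_real s * z - cnj b) / (z - cnj b)) / of_real s"
  by (simp add: lift_factor_def power_mult_distrib power_divide flip: of_real_power)

lemma scaled_pt_one: "w_plus p \<noteq> b \<Longrightarrow> w_plus p \<noteq> cnj b \<Longrightarrow> scaled_pt b 1 p = p"
  by (simp add: scaled_pt_def lift_factor_def pt_of_w_w_plus_w_minus)

lemma scaled_pt_in_level_curve:
  assumes b: "cmod b = 1" and p: "p \<in> level_curve (Re b)" and s: "0 < s"
    and zb: "w_plus p \<noteq> b" "w_plus p \<noteq> cnj b"
  shows "scaled_pt b s p \<in> level_curve (Re b)"
proof -
  define z where "z = w_plus p"
  have z0: "z \<noteq> 0" and v: "w_minus p = 1 / z"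
    using w_plus_nonzero[OF p] w_minus_eq_inverse[OF p] by (simp_all add: z_def)
  have sz0: "of_real s * z \<noteq> 0"
    using s z0 by simp
  have M: "(fst p)^2 = - ((z - b) * (z - cnj b)) / z"
    using p v factor_by_unit_roots[OF b z0] by (simp add: level_curve_iff z_def)
  have cancel: "\<And>A B X Y. A \<noteq> 0 \<Longrightarrow> B \<noteq> 0 \<Longrightarrow>
      - (A * B) / z * (X / A * (Y / B) / of_real s) = - (X * Y) / (of_real s * z)"
    using s z0 by (simp add: field_simps)
  have "(fst p * lift_factor b s z)^2 =
      - ((z - b) * (z - cnj b)) / z * ((of_real s * z - b) / (z - b) * ((of_real s * z - cnj b) / (z - cnj b)) / of_real s)"
    by (simp only: power_mult_distrib M lift_factor_square[OF s])
  also have "\<dots> = - ((of_real s * z - b) * (of_real s * z - cnj b)) / (of_real s * z)"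
    using zb by (intro cancel) (simp_all add: z_def)
  also have "\<dots> = 2 * of_real (Re b) - of_real s * z - 1 / (of_real s * z)"
    by (rule factor_by_unit_roots[OF b sz0, symmetric])
  finally have "(fst p * lift_factor b s z)^2 = 2 * of_real (Re b) - of_real s * z - 1 / z / of_real s"
    by (simp add: mult.commute)
  moreover have "of_real s * z * (1 / z / of_real s) = 1"
    using sz0 by simp
  ultimately show ?thesis
    unfolding scaled_pt_def pt_of_w_in_level_curve_iff z_def[symmetric] v by blast
qed

lemma continuous_on_scaled_pt:
  assumes b: "cmod b = 1" and cont: "continuous_on X S" "continuous_on X P"
    and pos: "\<And>x. x \<in> X \<Longrightarrow> 0 < S x \<and> 0 < (S x * cmod (w_plus (P x)) - 1) * (cmod (w_plus (P x)) - 1)"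
  shows "continuous_on X (\<lambda>x. scaled_pt b (S x) (P x))"
proof -
  have contw: "continuous_on X (\<lambda>x. w_plus (P x))" "continuous_on X (\<lambda>x. w_minus (P x))"
    unfolding w_plus_def w_minus_def by (intro continuous_intros cont(2))+
  have ne: "w_plus (P x) \<noteq> b" "w_plus (P x) \<noteq> cnj b" if "x \<in> X" for x
    using pos[OF that] b by auto
  have "continuous_on X (\<lambda>x. csqrt ((of_real (S x) * w_plus (P x) - c) / (w_plus (P x) - c)))"
    if "c = b \<or> c = cnj b" for c
    using that b pos ne cont contw
    by (intro continuous_on_csqrt_Re_pos continuous_intros Re_scaled_ratio_pos) auto
  moreover have S0: "S x \<noteq> 0" if "x \<in> X" for x
    using pos[OF that] by simp
  ultimately have "continuous_on X (\<lambda>x. lift_factor b (S x) (w_plus (P x)))"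
    unfolding lift_factor_def using cont by (intro continuous_intros) auto
  then show ?thesis
    unfolding scaled_pt_def pt_of_w_def using cont contw S0
    by (intro continuous_intros) auto
qed

definition clamp_radius :: "real \<Rightarrow> real \<Rightarrow> real" where
  "clamp_radius \<rho> r = max (1 / \<rho>) (min \<rho> r)"

definition radial_scale :: "real \<Rightarrow> real \<Rightarrow> real \<Rightarrow> real" where
  "radial_scale \<rho> t r = 1 - t + t * clamp_radius \<rho> r / r"

lemma clamp_radius_bounds: "1 < \<rho> \<Longrightarrow> 1 / \<rho> \<le> clamp_radius \<rho> r \<and> clamp_radius \<rho> r \<le> \<rho>"
  using inverse_less_self[of \<rho>] by (auto simp: clamp_radius_def)

lemma radial_scale_mult: "0 < r \<Longrightarrow> radial_scale \<rho> t r * r = (1 - t) * r + t * clamp_radius \<rho> r"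
  by (simp add: radial_scale_def field_simps)

lemma radial_scale_annulus: "0 < r \<Longrightarrow> 1 / \<rho> \<le> r \<Longrightarrow> r \<le> \<rho> \<Longrightarrow> radial_scale \<rho> t r = 1"
  by (simp add: radial_scale_def clamp_radius_def)

lemma radial_scale_mult_outer:
  assumes "1 < \<rho>" "t \<le> 1" "\<rho> \<le> r"
  shows "1 < radial_scale \<rho> t r * r"
proof -
  have "radial_scale \<rho> t r * r = (1 - t) * r + t * \<rho>"
    using assms radial_scale_mult[of r \<rho> t] inverse_less_self[OF assms(1)] by (simp add: clamp_radius_def)
  moreover have "(1 - t) * \<rho> \<le> (1 - t) * r"
    using assms by (intro mult_left_mono) auto
  moreover have "(1 - t) * \<rho> + t * \<rho> = \<rho>"
    by (simp add: algebra_simps)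
  ultimately show ?thesis
    using assms(1) by linarith
qed

lemma radial_scale_mult_inner:
  assumes "1 < \<rho>" "0 \<le> t" "t \<le> 1" "0 < r" "r \<le> 1 / \<rho>"
  shows "0 < radial_scale \<rho> t r * r" "radial_scale \<rho> t r * r < 1"
proof -
  have "radial_scale \<rho> t r * r = (1 - t) * r + t * (1 / \<rho>)"
    using assms radial_scale_mult[of r \<rho> t] inverse_less_self[OF assms(1)] by (simp add: clamp_radius_def)
  moreover have "(1 - t) * r \<le> (1 - t) * (1 / \<rho>)"
    using assms by (intro mult_left_mono) auto
  moreover have "0 < (1 - t) * r + t * (1 / \<rho>)"
    using assms by (cases "t = 0") (auto intro: add_nonneg_pos)
  moreover have "(1 - t) * (1 / \<rho>) + t * (1 / \<rho>) = 1 / \<rho>"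
    by (simp add: add_divide_distrib[symmetric])
  moreover have "1 / \<rho> < 1"
    using assms(1) by simp
  ultimately show "0 < radial_scale \<rho> t r * r" "radial_scale \<rho> t r * r < 1"
    by linarith+
qed

lemma radial_scale_outside_annulus:
  assumes "1 < \<rho>" "0 \<le> t" "t \<le> 1" "0 < r" "\<not> (1 / \<rho> < r \<and> r < \<rho>)"
  shows "0 < radial_scale \<rho> t r" "0 < (radial_scale \<rho> t r * r - 1) * (r - 1)"
proof -
  have sign: "1 < radial_scale \<rho> t r * r \<and> 1 < r \<or> 0 < radial_scale \<rho> t r * r \<and> radial_scale \<rho> t r * r < 1 \<and> r < 1"
  proof (cases "\<rho> \<le> r")
    case True
    then show ?thesis
      using radial_scale_mult_outer[OF assms(1,3) True] assms(1) by simp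
  next
    case False
    with assms(5) have "r \<le> 1 / \<rho>"
      by auto
    moreover have "1 / \<rho> < 1"
      using assms(1) by simp
    ultimately show ?thesis
      using radial_scale_mult_inner[OF assms(1-4)] by simp
  qed
  then show "0 < (radial_scale \<rho> t r * r - 1) * (r - 1)"
    by (auto intro: mult_pos_pos mult_neg_neg)
  from sign have "0 < radial_scale \<rho> t r * r"
    by auto
  then show "0 < radial_scale \<rho> t r"
    using assms(4) by (simp add: zero_less_mult_iff)
qed

definition annulus_retraction :: "complex \<Rightarrow> real \<Rightarrow> real \<times> pt \<Rightarrow> pt" where
  "annulus_retraction b \<rho> x =
    (if 1 / \<rho> < cmod (w_plus (snd x)) \<and> cmod (w_plus (snd x)) < \<rho> then snd x
     else scaled_pt b (radial_scale \<rho> (fst x) (cmod (w_plus (snd x)))) (snd x))"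

lemma annulus_retraction_outside:
  "\<not> (1 / \<rho> < cmod (w_plus p) \<and> cmod (w_plus p) < \<rho>) \<Longrightarrow>
    annulus_retraction b \<rho> (t, p) = scaled_pt b (radial_scale \<rho> t (cmod (w_plus p))) p"
  unfolding annulus_retraction_def by auto

lemma annulus_retraction_fixes_annulus:
  assumes "1 < \<rho>" "cmod b = 1" "p \<in> level_curve (Re b)"
    and "1 / \<rho> \<le> cmod (w_plus p)" "cmod (w_plus p) \<le> \<rho>"
  shows "annulus_retraction b \<rho> (t, p) = p"
proof (cases "1 / \<rho> < cmod (w_plus p) \<and> cmod (w_plus p) < \<rho>")
  case False
  then have "cmod (w_plus p) \<noteq> 1"
    using assms(1,4,5) inverse_less_self[OF assms(1)] by auto
  then have "w_plus p \<noteq> b" "w_plus p \<noteq> cnj b"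
    using assms(2) by auto
  moreover have "radial_scale \<rho> t (cmod (w_plus p)) = 1"
    using assms(4,5) w_plus_nonzero[OF assms(3)] by (simp add: radial_scale_annulus)
  ultimately show ?thesis
    by (simp add: annulus_retraction_outside[OF False] scaled_pt_one)
qed (simp add: annulus_retraction_def)

lemma annulus_retraction_in_level_curve:
  assumes "1 < \<rho>" "cmod b = 1" "0 \<le> t" "t \<le> 1" "p \<in> level_curve (Re b)"
  shows "annulus_retraction b \<rho> (t, p) \<in> level_curve (Re b)"
proof (cases "1 / \<rho> < cmod (w_plus p) \<and> cmod (w_plus p) < \<rho>")
  case False
  have r: "0 < cmod (w_plus p)"
    using w_plus_nonzero[OF assms(5)] by simp
  note scale = radial_scale_outside_annulus[OF assms(1,3,4) r False]
  then have "w_plus p \<noteq> b" "w_plus p \<noteq> cnj b"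
    using assms(2) by auto
  with scale show ?thesis
    by (simp add: annulus_retraction_outside[OF False] scaled_pt_in_level_curve[OF assms(2,5)])
qed (simp add: annulus_retraction_def assms)

lemma annulus_retraction_start:
  assumes "1 < \<rho>" "cmod b = 1" "p \<in> level_curve (Re b)"
  shows "annulus_retraction b \<rho> (0, p) = p"
proof (cases "1 / \<rho> < cmod (w_plus p) \<and> cmod (w_plus p) < \<rho>")
  case False
  then have "cmod (w_plus p) \<noteq> 1"
    using assms(1) by auto
  then have "w_plus p \<noteq> b" "w_plus p \<noteq> cnj b"
    using assms(2) by auto
  then show ?thesis
    by (simp add: annulus_retraction_outside[OF False] radial_scale_def scaled_pt_one)
qed (simp add: annulus_retraction_def)

lemma norm_w_plus_annulus_retraction_end:
  assumes "1 < \<rho>" "p \<in> level_curve c"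
  shows "cmod (w_plus (annulus_retraction b \<rho> (1, p))) = clamp_radius \<rho> (cmod (w_plus p))"
proof (cases "1 / \<rho> < cmod (w_plus p) \<and> cmod (w_plus p) < \<rho>")
  case True
  then show ?thesis
    by (simp add: annulus_retraction_def clamp_radius_def)
next
  case False
  have r: "0 < cmod (w_plus p)"
    using w_plus_nonzero[OF assms(2)] by simp
  note scale = radial_scale_outside_annulus[OF assms(1) zero_le_one order_refl r False]
  have "radial_scale \<rho> 1 (cmod (w_plus p)) * cmod (w_plus p) = clamp_radius \<rho> (cmod (w_plus p))"
    using radial_scale_mult[OF r, of \<rho> 1] by simp
  then show ?thesis
    using scale by (simp add: annulus_retraction_outside[OF False] scaled_pt_def norm_mult)
qed

lemma continuous_on_annulus_retraction_outside:
  assumes "1 < \<rho>" "cmod b = 1"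
  shows "continuous_on ({0..1} \<times> level_curve (Re b) -
      {x. 1 / \<rho> < cmod (w_plus (snd x)) \<and> cmod (w_plus (snd x)) < \<rho>}) (annulus_retraction b \<rho>)"
    (is "continuous_on ?B _")
proof -
  define r where "r = (\<lambda>x::real \<times> pt. cmod (w_plus (snd x)))"
  define S where "S = (\<lambda>x. radial_scale \<rho> (fst x) (r x))"
  have B: "0 \<le> fst x" "fst x \<le> 1" "0 < r x" "\<not> (1 / \<rho> < r x \<and> r x < \<rho>)" if "x \<in> ?B" for x
    using that w_plus_nonzero[of "snd x"] by (auto simp: r_def)
  have "continuous_on ?B r"
    unfolding r_def w_plus_def by (intro continuous_intros)
  then have "continuous_on ?B S"
    unfolding S_def radial_scale_def clamp_radius_def using B(3)
    by (intro continuous_intros) (auto simp: less_le)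
  moreover have "0 < S x \<and> 0 < (S x * r x - 1) * (r x - 1)" if "x \<in> ?B" for x
    using radial_scale_outside_annulus[OF assms(1) B[OF that]] by (simp add: S_def)
  ultimately have "continuous_on ?B (\<lambda>x. scaled_pt b (S x) (snd x))"
    by (intro continuous_on_scaled_pt assms(2) continuous_intros) (auto simp: r_def)
  then show ?thesis
    by (rule continuous_on_eq) (auto simp: annulus_retraction_outside S_def r_def)
qed

lemma continuous_on_annulus_retraction:
  assumes "1 < \<rho>" "cmod b = 1"
  shows "continuous_on ({0..1} \<times> level_curve (Re b)) (annulus_retraction b \<rho>)"
proof -
  define D where "D = {0..1::real} \<times> level_curve (Re b)"
  define r where "r = (\<lambda>x::real \<times> pt. cmod (w_plus (snd x)))"
  define A where "A = D \<inter> {x. 1 / \<rho> \<le> r x \<and> r x \<le> \<rho>}"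
  define B where "B = D - {x. 1 / \<rho> < r x \<and> r x < \<rho>}"
  have cont_r: "continuous_on UNIV r"
    unfolding r_def w_plus_def by (intro continuous_intros)
  have "closed D"
    unfolding D_def by (intro closed_Times closed_atLeastAtMost closed_level_curve)
  then have closed: "closed A" "closed B"
    unfolding A_def B_def
    by (intro closed_Int closed_Diff closed_Collect_conj closed_Collect_le open_Collect_conj open_Collect_less
        cont_r continuous_on_const; assumption)+
  have "continuous_on A snd"
    by (intro continuous_intros)
  moreover have "snd x = annulus_retraction b \<rho> x" if "x \<in> A" for x
    using that annulus_retraction_fixes_annulus[OF assms, of "snd x" "fst x"]
    by (auto simp: A_def D_def r_def)
  ultimately have "continuous_on A (annulus_retraction b \<rho>)"
    by (rule continuous_on_eq)
  moreover have "continuous_on B (annulus_retraction b \<rho>)"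
    using continuous_on_annulus_retraction_outside[OF assms] by (simp add: B_def D_def r_def)
  moreover have "D = A \<union> B"
    by (auto simp: A_def B_def)
  ultimately show ?thesis
    using continuous_on_closed_Un[OF closed] by (simp add: D_def)
qed

lemma real_triple_in_level_curve_iff:
  "(of_real m, of_real a, of_real b) \<in> level_curve c \<longleftrightarrow> m^2 / 2 + a = c \<and> a^2 + b^2 = 1"
proof -
  have "(of_real m :: complex)^2 / 2 + of_real a = of_real (m^2 / 2 + a)"
    by simp
  moreover have "(of_real a :: complex)^2 + (of_real b)^2 = of_real (a^2 + b^2)"
    by simp
  ultimately show ?thesis
    unfolding level_curve_def by (simp only: mem_Collect_eq prod.case of_real_eq_iff of_real_eq_1_iff)
qed

lemma Gamma_one: "Gamma 1 = level_curve 1 - {(0, 1, 0)}"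
  by (simp add: Gamma_def level_curve_def)

lemma equilibrium_in_Omega: "(0, 1, 0) \<in> Omega"
proof -
  define f :: "real \<Rightarrow> pt" where
    "f \<mu> = (of_real \<mu>, of_real (1 - \<mu>^2 / 2), of_real (\<mu> * sqrt (1 - \<mu>^2 / 4)))" for \<mu>
  have "f \<mu> \<in> closure {p \<in> Gamma 1. real_pt p}" if "0 < \<mu>" "\<mu> < 1" for \<mu>
  proof -
    have "\<mu>^2 \<le> 1"
      using that by (simp add: power_le_one)
    then have "(\<mu> * sqrt (1 - \<mu>^2 / 4))^2 = \<mu>^2 * (1 - \<mu>^2 / 4)"
      by (simp add: power_mult_distrib)
    then have "(1 - \<mu>^2 / 2)^2 + (\<mu> * sqrt (1 - \<mu>^2 / 4))^2 = 1"
      by (simp add: algebra_simps power2_eq_square)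
    then have "f \<mu> \<in> level_curve 1"
      unfolding f_def real_triple_in_level_curve_iff by simp
    moreover have "f \<mu> \<noteq> (0, 1, 0)" "real_pt (f \<mu>)"
      using that by (simp_all add: f_def real_pt_def)
    ultimately show ?thesis
      using closure_subset by (fastforce simp: Gamma_one)
  qed
  then have "\<forall>\<^sub>F \<mu> in at_right 0. f \<mu> \<in> closure {p \<in> Gamma 1. real_pt p}"
    using eventually_at_right_real[of 0 1] by (auto elim: eventually_mono)
  moreover have "(f \<longlongrightarrow> (0, 1, 0)) (at_right 0)"
    unfolding f_def by (auto intro!: tendsto_eq_intros)
  ultimately show ?thesis
    unfolding Omega_def by (intro Lim_in_closed_set[of _ f]) auto
qed

lemma real_level_curve_subset_Omega:
  assumes "p \<in> level_curve 1" "real_pt p"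
  shows "p \<in> Omega"
proof (cases "p = (0, 1, 0)")
  case False
  with assms have "p \<in> {p \<in> Gamma 1. real_pt p}"
    by (simp add: Gamma_one)
  then show ?thesis
    unfolding Omega_def by (rule closure_subset[THEN subsetD])
next
  case True
  then show ?thesis
    by (simp only: equilibrium_in_Omega)
qed

lemma real_pt_iff: "real_pt p \<longleftrightarrow> (\<exists>m a b. p = (of_real m, of_real a, of_real b))"
  by (cases p) (auto simp: real_pt_def complex_is_Real_iff[symmetric] elim!: Reals_cases)

lemma bounded_real_level_curve: "bounded {p \<in> level_curve c. real_pt p}"
  unfolding bounded_iff
proof (intro exI ballI)
  fix p assume "p \<in> {p \<in> level_curve c. real_pt p}"
  then obtain m a b where p: "p = (of_real m, of_real a, of_real b)"
    and eq: "m^2 / 2 + a = c" "a^2 + b^2 = 1"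
    by (auto simp: real_pt_iff real_triple_in_level_curve_iff)
  have "a^2 \<le> 1"
    using eq(2) zero_le_power2[of b] by linarith
  moreover have "b^2 \<le> 1"
    using eq(2) zero_le_power2[of a] by linarith
  ultimately have ab: "\<bar>a\<bar> \<le> 1" "\<bar>b\<bar> \<le> 1"
    by (simp_all add: abs_square_le_1)
  have "0 \<le> (\<bar>m\<bar> - 1)^2"
    by simp
  then have "\<bar>m\<bar> \<le> 1 + m^2"
    by (simp add: power2_diff)
  also have "\<dots> \<le> 2 * \<bar>c\<bar> + 3"
    using eq(1) ab by linarith
  finally have m: "\<bar>m\<bar> \<le> 2 * \<bar>c\<bar> + 3" .
  have "norm p \<le> \<bar>m\<bar> + (\<bar>a\<bar> + \<bar>b\<bar>)"
    using norm_Pair_le[of "of_real m :: complex" "(of_real a :: complex, of_real b :: complex)"]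
      norm_Pair_le[of "of_real a :: complex" "of_real b :: complex"] by (simp add: p)
  then show "norm p \<le> 2 * \<bar>c\<bar> + 5"
    using ab m by linarith
qed

lemma compact_Omega: "compact Omega"
proof -
  have "bounded {p \<in> Gamma 1. real_pt p}"
    by (rule bounded_subset[OF bounded_real_level_curve]) (auto simp: Gamma_one)
  then show ?thesis
    unfolding Omega_def by simp
qed

lemma unit_circle_pt_in_Omega:
  assumes "cmod e = 1" "m^2 = 2 - 2 * Re e"
  shows "pt_of_w (of_real m) e (cnj e) \<in> Omega"
proof (rule real_level_curve_subset_Omega)
  have "(of_real m)^2 = (of_real (2 - 2 * Re e) :: complex)"
    by (metis assms(2) of_real_power)
  also have "\<dots> = 2 * of_real 1 - (e + cnj e)"
    by (simp add: complex_add_cnj)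
  finally show "pt_of_w (of_real m) e (cnj e) \<in> level_curve 1"
    using complex_norm_square[of e] assms(1) by (simp add: pt_of_w_in_level_curve_iff)
  show "real_pt (pt_of_w (of_real m) e (cnj e))"
    by (simp add: pt_of_w_def real_pt_def complex_diff_cnj)
qed

lemma norm_diff_sgn_annulus:
  assumes \<rho>: "1 < \<rho>" and annulus: "1 / \<rho> \<le> cmod z" "cmod z \<le> \<rho>"
  shows "cmod (z - sgn z) \<le> \<rho> - 1" "cmod (1 / z - cnj (sgn z)) \<le> \<rho> - 1"
proof -
  define R where "R = cmod z"
  define e where "e = sgn z"
  have "0 < 1 / \<rho>"
    using \<rho> by simp
  then have R: "0 < R"
    using annulus(1) unfolding R_def by linarith
  have e: "cmod e = 1" "e \<noteq> 0"
    using R by (simp_all add: R_def e_def norm_sgn sgn_zero_iff)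
  have z: "z = of_real R * e"
    using R by (simp add: R_def e_def sgn_eq)
  have "z - e = of_real (R - 1) * e"
    by (simp add: z algebra_simps)
  then have "cmod (z - e) = \<bar>R - 1\<bar>"
    using e by (simp only: norm_mult norm_of_real) simp
  then show "cmod (z - sgn z) \<le> \<rho> - 1"
    using abs_sub_one_le_annulus[OF \<rho>] annulus by (simp add: R_def e_def)
  have "cnj e = 1 / e"
    using complex_norm_square[of e] e by (simp add: field_simps)
  then have "1 / z - cnj e = of_real (1 / R - 1) / e"
    using R e by (simp add: z field_simps)
  then have "cmod (1 / z - cnj e) = \<bar>1 / R - 1\<bar>"
    using e by (simp only: norm_divide norm_of_real) simp
  moreover have "1 / \<rho> \<le> 1 / R" "1 / R \<le> \<rho>"
    using annulus R \<rho> by (auto simp: R_def field_simps)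
  ultimately show "cmod (1 / z - cnj (sgn z)) \<le> \<rho> - 1"
    using abs_sub_one_le_annulus[OF \<rho>] by (simp add: e_def)
qed

lemma Omega_near_annulus_part:
  assumes p: "p \<in> level_curve c" and c: "c \<le> 1" and \<rho>: "1 < \<rho>"
    and annulus: "1 / \<rho> \<le> cmod (w_plus p)" "cmod (w_plus p) \<le> \<rho>"
  shows "\<exists>q\<in>Omega. dist q p \<le> sqrt (2 * (1 - c) + 2 * (\<rho> - 1)) + 2 * (\<rho> - 1)"
proof -
  define z where "z = w_plus p"
  define e where "e = sgn z"
  have e: "cmod e = 1"
    using w_plus_nonzero[OF p] by (simp add: e_def z_def norm_sgn)
  have v: "w_minus p = 1 / z"
    using w_minus_eq_inverse[OF p] by (simp add: z_def)
  note dz = norm_diff_sgn_annulus(1)[OF \<rho> annulus, folded z_def e_def]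
  note dv = norm_diff_sgn_annulus(2)[OF \<rho> annulus, folded z_def e_def, folded v]
  have M: "(fst p)^2 = 2 * of_real c - z - w_minus p"
    using p by (simp add: level_curve_iff z_def)
  have "(of_real (2 - 2 * Re e) :: complex) = 2 - (e + cnj e)"
    by (simp add: complex_add_cnj)
  then have eq: "(fst p)^2 - of_real (2 - 2 * Re e) = 2 * of_real (c - 1) - (z - e) - (w_minus p - cnj e)"
    unfolding M by (simp add: algebra_simps)
  define a :: complex where "a = 2 * of_real (c - 1)"
  have "cmod a = 2 * (1 - c)"
    using c by (simp only: a_def norm_mult norm_of_real) simp
  then have "cmod ((fst p)^2 - of_real (2 - 2 * Re e)) \<le> 2 * (1 - c) + 2 * (\<rho> - 1)"
    unfolding eq a_def[symmetric]
    using norm_triangle_ineq4[of "a - (z - e)" "w_minus p - cnj e"] norm_triangle_ineq4[of a "z - e"] dz dv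
    by (smt (verit))
  moreover obtain m where m: "m^2 = 2 - 2 * Re e"
    and dm: "cmod (fst p - of_real m) \<le> sqrt (cmod ((fst p)^2 - of_real (2 - 2 * Re e)))"
    using exists_real_root_near[of "2 - 2 * Re e" "fst p"] complex_Re_le_cmod[of e] e by auto
  ultimately have dm: "cmod (fst p - of_real m) \<le> sqrt (2 * (1 - c) + 2 * (\<rho> - 1))"
    by (smt (verit) real_sqrt_le_mono)
  define q where "q = pt_of_w (of_real m) e (cnj e)"
  have qO: "q \<in> Omega"
    unfolding q_def using e m by (rule unit_circle_pt_in_Omega)
  have "dist p q \<le> cmod (fst p - of_real m) + cmod (z - e) + cmod (w_minus p - cnj e)"
    using dist_pt_of_w_le[of "fst p" z "w_minus p" "of_real m" e "cnj e"]
    by (simp only: q_def z_def pt_of_w_w_plus_w_minus)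
  with dm dz dv have "dist q p \<le> sqrt (2 * (1 - c) + 2 * (\<rho> - 1)) + 2 * (\<rho> - 1)"
    by (simp only: dist_commute[of q p]) (smt (verit))
  with qO show ?thesis
    by (rule rev_bexI)
qed

lemma pi1_level_curve_generated_near_Omega:
  fixes U :: "pt set"
  assumes c: "-1 \<le> c" "c \<le> 1" and \<rho>: "1 < \<rho>"
    and U: "\<And>q y. q \<in> Omega \<Longrightarrow> y \<in> level_curve c \<Longrightarrow>
      dist q y \<le> sqrt (2 * (1 - c) + 2 * (\<rho> - 1)) + 2 * (\<rho> - 1) \<Longrightarrow> y \<in> U"
  shows "pi1_generated_in (level_curve c) U"
proof -
  define b where "b = Complex c (sqrt (1 - c^2))"
  have "c^2 \<le> 1"
    using c by (simp add: abs_square_le_1)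
  then have b: "cmod b = 1" and c_eq: "c = Re b"
    by (simp_all add: b_def cmod_def)
  define x0 :: pt where "x0 = (csqrt (2 * of_real c + 2), -1, 0)"
  have x0: "x0 \<in> level_curve c" "w_plus x0 = -1"
    by (simp_all add: x0_def level_curve_def w_plus_def add_divide_distrib)
  show ?thesis
  proof (rule pi1_generated_in_if_deforms_into[of _ "annulus_retraction b \<rho>" x0])
    show "continuous_on ({0..1} \<times> level_curve c) (annulus_retraction b \<rho>)"
      using continuous_on_annulus_retraction[OF \<rho> b] by (simp add: c_eq)
    show "annulus_retraction b \<rho> (t, x) \<in> level_curve c" if "t \<in> {0..1}" "x \<in> level_curve c" for t x
      using annulus_retraction_in_level_curve[OF \<rho> b] that by (simp add: c_eq)
    show "annulus_retraction b \<rho> (0, x) = x" if "x \<in> level_curve c" for x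
      using annulus_retraction_start[OF \<rho> b] that by (simp add: c_eq)
    show "annulus_retraction b \<rho> (t, x0) = x0" for t
      using annulus_retraction_fixes_annulus[OF \<rho> b] x0 \<rho> by (simp add: c_eq)
    show "annulus_retraction b \<rho> (1, x) \<in> U" if x: "x \<in> level_curve c" for x
    proof -
      define y where "y = annulus_retraction b \<rho> (1, x)"
      have y: "y \<in> level_curve c"
        using annulus_retraction_in_level_curve[OF \<rho> b _ _ x[unfolded c_eq]] by (simp add: y_def c_eq)
      have "cmod (w_plus y) = clamp_radius \<rho> (cmod (w_plus x))"
        using norm_w_plus_annulus_retraction_end[OF \<rho> x] by (simp add: y_def)
      then obtain q where "q \<in> Omega" "dist q y \<le> sqrt (2 * (1 - c) + 2 * (\<rho> - 1)) + 2 * (\<rho> - 1)"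
        using Omega_near_annulus_part[OF y c(2) \<rho>] clamp_radius_bounds[OF \<rho>] by auto
      then show ?thesis
        using U y by (simp add: y_def)
    qed
  qed (use x0 in simp)
qed

lemma pi1_Gamma_generated_near_Omega:
  fixes U :: "pt set"
  assumes k: "0 < k" "k < 1"
    and U: "\<And>q y. q \<in> Omega \<Longrightarrow> y \<in> level_curve (2 * k^2 - 1) \<Longrightarrow>
      dist q y \<le> sqrt (10 * (1 - k)) + 2 * (1 - k) \<Longrightarrow> y \<in> U"
  shows "pi1_generated_in (Gamma k) U"
proof -
  define c where "c = 2 * k^2 - 1"
  have "k^2 \<le> 1" "0 \<le> (1 - k)^2"
    using k by (simp_all add: power_le_one)
  then have c: "-1 \<le> c" "c \<le> 1" "2 * (1 - c) + 2 * ((2 - k) - 1) \<le> 10 * (1 - k)"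
    by (simp_all add: c_def power2_diff algebra_simps)
  have "pi1_generated_in (level_curve c) U"
  proof (rule pi1_level_curve_generated_near_Omega[OF c(1,2), of "2 - k"])
    fix q y assume q: "q \<in> Omega" and y: "y \<in> level_curve c"
      and "dist q y \<le> sqrt (2 * (1 - c) + 2 * ((2 - k) - 1)) + 2 * ((2 - k) - 1)"
    moreover have "sqrt (2 * (1 - c) + 2 * ((2 - k) - 1)) \<le> sqrt (10 * (1 - k))"
      using c(3) by (rule real_sqrt_le_mono)
    moreover have "2 * ((2 - k) - 1) = 2 * (1 - k)"
      by simp
    ultimately have "dist q y \<le> sqrt (10 * (1 - k)) + 2 * (1 - k)"
      by linarith
    with q y show "y \<in> U"
      unfolding c_def by (rule U)
  qed (use k in simp)
  then show ?thesis
    using k by (simp add: Gamma_eq_level_curve c_def)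
qed

theorem lemma5:
  fixes U :: "pt set"
  assumes "openin (top_of_set NN) U" and "Omega \<subseteq> U"
  shows "\<exists>\<epsilon>>0. \<forall>k::real. 0 < k \<and> 0 < 1 - k \<and> 1 - k < \<epsilon> \<longrightarrow> pi1_generated_in (Gamma k) U"
proof -
  obtain V where V: "open V" "U = NN \<inter> V"
    using assms(1) by (auto simp: openin_open)
  obtain \<eta> where \<eta>: "0 < \<eta>" "\<And>x. x \<in> Omega \<Longrightarrow> ball x \<eta> \<subseteq> V"
    using Heine_Borel_lemma[OF compact_Omega, of "{V}"] assms(2) V by auto
  have "((\<lambda>\<delta>. sqrt (10 * \<delta>) + 2 * \<delta>) \<longlongrightarrow> 0) (at_right 0)"
    by (auto intro!: tendsto_eq_intros)
  then have "\<forall>\<^sub>F \<delta> in at_right 0. sqrt (10 * \<delta>) + 2 * \<delta> < \<eta>"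
    using \<eta>(1) by (rule order_tendstoD(2))
  then obtain \<epsilon> where \<epsilon>: "0 < \<epsilon>" "\<And>\<delta>. 0 < \<delta> \<Longrightarrow> \<delta> < \<epsilon> \<Longrightarrow> sqrt (10 * \<delta>) + 2 * \<delta> < \<eta>"
    by (auto simp: eventually_at_right_field)
  show ?thesis
  proof (intro exI[of _ \<epsilon>] conjI allI impI \<epsilon>(1))
    fix k :: real
    assume k: "0 < k \<and> 0 < 1 - k \<and> 1 - k < \<epsilon>"
    show "pi1_generated_in (Gamma k) U"
    proof (rule pi1_Gamma_generated_near_Omega)
      fix q y assume q: "q \<in> Omega" and "y \<in> level_curve (2 * k^2 - 1)"
        and "dist q y \<le> sqrt (10 * (1 - k)) + 2 * (1 - k)"
      then show "y \<in> U"
        using \<epsilon>(2)[of "1 - k"] k \<eta>(2)[OF q] level_curve_subset_NN V(2) by fastforce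
    qed (use k in auto)
  qed
qed

end
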